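(* Let $n$ be even, $k\ge2$, and let $f(x)=a_0(x)+2a_1(x)+\cdots+2^{k-1}a_{k-1}(x)$ from $\mathbb{V}_n$ to $\mathbb{Z}_{2^k}$ be gbent. Then its generalized Gray map $\psi(f):\mathbb{V}_n\times\mathbb{F}_2^{k-1}\to\mathbb{F}_2$, $\psi(f)(x,y_0,\ldots,y_{k-2})=\bigoplus_{i=0}^{k-2}a_i(x)y_i\oplus a_{k-1}(x)$, is $(k-1)$-plateaued, i.e. $\mathcal{W}_{\psi(f)}(w)\in\{0,\pm2^{n/2+k-1}\}$ for all $w\in\mathbb{V}_n\times\mathbb{F}_2^{k-1}$.
   Context: $\mathbb{V}_n$ is an $n$-dimensional $\mathbb{F}_2$-vector space with inner product $u\cdot x$; on $\mathbb{V}_n\times\mathbb{F}_2^{k-1}$ use the inner product $(u,z)\cdot(x,y)=u\cdot x\oplus z\cdot y$. $\mathcal{W}_F(w)=\sum_v(-1)^{F(v)\oplus w\cdot v}$. A Boolean function in $N$ variables is $s$-plateaued if its Walsh values lie in $\{0,\pm2^{(N+s)/2}\}$. $f$ is gbent if $|\sum_x\zeta_{2^k}^{f(x)}(-1)^{u\cdot x}|=2^{n/2}$ for all $u$, $\zeta_{2^k}=e^{2\pi i/2^k}$. *)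

theory Defs
  imports Complex_Main
begin

definition vecs :: "nat \<Rightarrow> bool list set" where
  "vecs n = {x. length x = n}"

definition dotp :: "bool list \<Rightarrow> bool list \<Rightarrow> bool" where
  "dotp u x = odd (card {i. i < length x \<and> i < length u \<and> u ! i \<and> x ! i})"

definition walsh :: "nat \<Rightarrow> (bool list \<Rightarrow> bool) \<Rightarrow> bool list \<Rightarrow> int" where
  "walsh N F w = (\<Sum>v\<in>vecs N. (-1::int) ^ of_bool (F v \<noteq> dotp w v))"

definition plateaued :: "nat \<Rightarrow> nat \<Rightarrow> (bool list \<Rightarrow> bool) \<Rightarrow> bool" where
  "plateaued N s F \<longleftrightarrow>
     (\<forall>w\<in>vecs N. real_of_int (walsh N F w) \<in> {0, 2 powr ((real N + real s) / 2), - (2 powr ((real N + real s) / 2))})"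

definition zeta :: "nat \<Rightarrow> complex" where
  "zeta k = cis (2 * pi / 2 ^ k)"

text \<open>f : V_n \<rightarrow> Z_{2^k} (values taken in {0..<2^k}) is gbent.\<close>
definition gbent :: "nat \<Rightarrow> nat \<Rightarrow> (bool list \<Rightarrow> nat) \<Rightarrow> bool" where
  "gbent n k f \<longleftrightarrow>
     (\<forall>u\<in>vecs n. cmod (\<Sum>x\<in>vecs n. zeta k ^ f x * (-1) ^ of_bool (dotp u x)) = 2 powr (real n / 2))"

definition gfun :: "nat \<Rightarrow> (nat \<Rightarrow> bool list \<Rightarrow> bool) \<Rightarrow> bool list \<Rightarrow> nat" where
  "gfun k a x = (\<Sum>i<k. 2 ^ i * of_bool (a i x))"

text \<open>Generalized Gray map psi(f) on V_n x F_2^(k-1), an element (x,y) encoded as the list x @ y.\<close>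
definition gray :: "nat \<Rightarrow> nat \<Rightarrow> (nat \<Rightarrow> bool list \<Rightarrow> bool) \<Rightarrow> bool list \<Rightarrow> bool" where
  "gray n k a v = (let x = take n v; y = drop n v in
     odd (card {i. i < k - 1 \<and> a i x \<and> y ! i}) \<noteq> a (k - 1) x)"

end

theory Submission
  imports Defs "Berlekamp_Zassenhaus.Factor_Bound"
begin

text \<open>
  Write \<open>k = K + 1\<close> and group the points \<open>x\<close> by the vector \<open>z = (a\<^sub>0 x, \<dots>, a\<^sub>K\<^sub>-\<^sub>1 x)\<close>. With the
  fibre sums \<open>T\<^sub>u(z) = \<Sum>\<^bsub>x \<mapsto> z\<^esub> (-1)^(a\<^sub>K x + u\<cdot>x)\<close>, the Walsh value of the Gray map at \<open>(u, z)\<close>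
  is \<open>2^K T\<^sub>u(z)\<close>, while the gbent sum at \<open>u\<close> is \<open>P(\<zeta>)\<close> for the integer polynomial
  \<open>P = \<Sum>\<^sub>z T\<^sub>u(z) X^[z]\<close> of degree \<open>< 2^K\<close>, where \<open>[z]\<close> is the binary value of \<open>z\<close> and \<open>\<zeta>\<close> is a
  primitive \<open>2^k\<close>-th root of unity. So it suffices that \<open>|P(\<zeta>)|\<^sup>2 = 4^e\<close> forces every coefficient
  of \<open>P\<close> into \<open>{0, \<plusminus>2^e}\<close>.

  In \<open>\<int>[\<zeta>]\<close> the prime 2 is totally ramified: \<open>2\<close> is a unit times \<open>(1 - \<zeta>)^(2^K)\<close>, and the residue
  of \<open>P(\<zeta>)\<close> modulo \<open>1 - \<zeta>\<close> is the parity of \<open>P(1)\<close>. Comparing \<open>(1 - \<zeta>)\<close>-adic valuations of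
  \<open>P(\<zeta>)\<close> and of its norm \<open>4^e\<close> shows \<open>P(\<zeta>) = 2^e R(\<zeta>)\<close> with \<open>|R(\<zeta>)| = 1\<close>; as \<open>X^(2^K) + 1\<close>
  is irreducible (Eisenstein at 2), we may take \<open>P = 2^e R\<close>. Then \<open>|R| = 1\<close> also at all conjugates
  \<open>\<zeta>^(2l+1)\<close>, and Parseval's identity over them gives \<open>\<Sum> coeff(R)\<^sup>2 = 1\<close>.
\<close>

section \<open>The primitive \<open>2^(m+1)\<close>-th root of unity\<close>

abbreviation \<zeta> :: "nat \<Rightarrow> complex" where
  "\<zeta> m \<equiv> zeta (Suc m)"

lemma zeta_power: "\<zeta> m ^ r = cis (real r * pi / 2 ^ m)"
  unfolding zeta_def DeMoivre by (simp add: field_simps)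

lemma zeta_power_half: "\<zeta> m ^ 2 ^ m = -1"
  by (simp add: zeta_power)

lemma zeta_power_order: "\<zeta> m ^ (2 * 2 ^ m) = 1"
  unfolding mult.commute[of 2] power_mult zeta_power_half by simp

lemma cnj_root_of_minus_one:
  fixes x :: complex
  assumes "x ^ 2 ^ m = -1"
  shows "cnj x = x ^ (2 * 2 ^ m - 1)"
proof -
  have "norm x ^ 2 ^ m = 1"
    using arg_cong[OF assms, of norm] by (simp add: norm_power)
  then have "norm x = 1"
    using power_eq_imp_eq_base[of "norm x" "2 ^ m" 1] by simp
  then have "cnj x * x = 1"
    using complex_norm_square[of x] by (simp add: mult.commute)
  moreover have "x ^ (2 * 2 ^ m - 1) * x = x ^ (2 * 2 ^ m)"
    by (simp flip: power_Suc2)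
  moreover have "x ^ (2 * 2 ^ m) = 1"
    unfolding mult.commute[of 2] power_mult assms by simp
  moreover have "x \<noteq> 0"
    using \<open>norm x = 1\<close> by auto
  ultimately show ?thesis
    by (metis mult_cancel_right)
qed

lemma cnj_zeta: "cnj (\<zeta> m) = \<zeta> m ^ (2 * 2 ^ m - 1)"
  by (rule cnj_root_of_minus_one[OF zeta_power_half])

lemma zeta_power_eq_1D:
  assumes "\<zeta> m ^ r = 1"
  shows "2 * 2 ^ m dvd r"
proof -
  have "cos (real r * pi / 2 ^ m) = 1"
    using arg_cong[OF assms[unfolded zeta_power], of Re] by simp
  then obtain i :: int where i: "real r * pi / 2 ^ m = real_of_int i * 2 * pi"
    unfolding cos_one_2pi_int by blast
  have "real r = real_of_int i * 2 * 2 ^ m"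
    using arg_cong[OF i, of "\<lambda>t. t * 2 ^ m / pi"] by simp
  then have "int r = i * (2 * 2 ^ m)"
    by (simp only: of_int_eq_iff [symmetric, where 'a = real]) simp
  then have "int (2 * 2 ^ m) dvd int r"
    by simp
  then show ?thesis
    by (simp only: of_nat_dvd_iff)
qed

section \<open>The cyclotomic polynomial \<open>X^(2^m) + 1\<close>\<close>

lemma power2_power_add_mod2:
  fixes A B C :: "'a :: comm_ring_1"
  shows "\<exists>W. (A + B + 2 * C) ^ 2 ^ m = A ^ 2 ^ m + B ^ 2 ^ m + 2 * W"
proof (induction m)
  case 0
  show ?case by auto
next
  case (Suc m)
  then obtain W where W: "(A + B + 2 * C) ^ 2 ^ m = A ^ 2 ^ m + B ^ 2 ^ m + 2 * W"
    by blast
  let ?a = "A ^ 2 ^ m" and ?b = "B ^ 2 ^ m"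
  have square: "x ^ 2 ^ Suc m = (x ^ 2 ^ m) ^ 2" for x :: 'a
    by (simp add: power_mult[symmetric] mult.commute)
  have "(A + B + 2 * C) ^ 2 ^ Suc m = (?a + ?b + 2 * W) ^ 2"
    unfolding square W ..
  also have "\<dots> = ?a ^ 2 + ?b ^ 2 + 2 * (?a * ?b + 2 * (?a + ?b) * W + 2 * W ^ 2)"
    by (simp add: power2_eq_square algebra_simps)
  finally show ?case
    unfolding square by blast
qed

lemma even_coeffs_of_factor:
  fixes F G H :: "int poly"
  assumes "F = G * H" and "degree G < degree F" and "odd (coeff H 0)"
    and "\<And>i. i < degree F \<Longrightarrow> even (coeff F i)"
  shows "i \<le> degree G \<Longrightarrow> even (coeff G i)"
proof (induction i rule: less_induct)
  case (less i)
  have "coeff F i = coeff G i * coeff H 0 + (\<Sum>j<i. coeff G j * coeff H (i - j))"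
    unfolding assms(1) coeff_mult by (simp add: lessThan_Suc_atMost[symmetric])
  moreover have "even (\<Sum>j<i. coeff G j * coeff H (i - j))"
    using less by (intro dvd_sum) auto
  moreover have "even (coeff F i)"
    using less assms(2,4) by simp
  ultimately show ?case
    using assms(3) by (metis dvd_add_left_iff even_mult_iff)
qed

lemma eisenstein_2:
  fixes F G H :: "int poly"
  assumes F: "F = G * H" and "odd (lead_coeff F)"
    and even: "\<And>i. i < degree F \<Longrightarrow> even (coeff F i)" and "\<not> 4 dvd coeff F 0"
  shows "degree G = 0 \<or> degree H = 0"
proof (rule ccontr)
  assume nonconst: "\<not> ?thesis"
  have "F \<noteq> 0"
    using assms(2) by auto
  then have "G \<noteq> 0" "H \<noteq> 0" and deg: "degree F = degree G + degree H"
    using F degree_mult_eq by auto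
  have odd_lead: "odd (lead_coeff G)" "odd (lead_coeff H)"
    using assms(2) unfolding F lead_coeff_mult by auto
  show False
  proof (cases "odd (coeff H 0)")
    case True
    have "degree G < degree F"
      using deg nonconst by simp
    from even_coeffs_of_factor[OF F this True even, of "degree G"]
    show False
      using odd_lead(1) by simp
  next
    case H_even: False
    show False
    proof (cases "odd (coeff G 0)")
      case True
      have "degree H < degree F"
        using deg nonconst by simp
      from even_coeffs_of_factor[OF F[unfolded mult.commute[of G]] this True even, of "degree H"]
      show False
        using odd_lead(2) by simp
    next
      case False
      then have "4 dvd coeff G 0 * coeff H 0"
        using H_even by (auto elim!: evenE)
      then show False
        using assms(4) F by (simp add: coeff_mult_0)
    qed
  qed
qed

definition cyclo :: "nat \<Rightarrow> int poly" where
  "cyclo m = [:0, 1:] ^ 2 ^ m + 1"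

lemma cyclo_monom: "cyclo m = monom 1 (2 ^ m) + 1"
  by (simp add: cyclo_def monom_altdef)

lemma degree_cyclo [simp]: "degree (cyclo m) = 2 ^ m"
  by (simp add: cyclo_monom degree_add_eq_left degree_monom_eq)

lemma coeff_cyclo_degree [simp]: "coeff (cyclo m) (2 ^ m) = 1"
  by (simp add: cyclo_monom)

lemma cyclo_nonzero [simp]: "cyclo m \<noteq> 0"
  using coeff_cyclo_degree[of m] by (metis coeff_0 zero_neq_one)

lemma poly_cyclo_1 [simp]: "poly (cyclo m) 1 = 2"
  by (simp add: cyclo_def)

lemma cyclo_shift_eisenstein:
  obtains V where "pcompose (cyclo m) [:1, 1:] = [:0, 1:] ^ 2 ^ m + smult 2 V"
proof -
  obtain W where W: "([:0, 1:] + 1 + 2 * 0 :: int poly) ^ 2 ^ m = [:0, 1:] ^ 2 ^ m + 1 + 2 * W"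
    using power2_power_add_mod2[of "[:0, 1:]" 1 0 m] unfolding power_one by blast
  have shift: "[:1, 1:] = [:0, 1:] + 1 + (2 * 0 :: int poly)"
    by (simp add: poly_eq_iff coeff_pCons split: nat.split)
  have X: "pcompose [:0, 1:] q = q" for q :: "int poly"
    by (simp add: pcompose_pCons)
  have "pcompose (cyclo m) [:1, 1:] = [:0, 1:] ^ 2 ^ m + 1 + 2 * W + 1"
    unfolding cyclo_def pcompose_add pcompose_hom.hom_power X pcompose_1 shift W ..
  also have "\<dots> = [:0, 1:] ^ 2 ^ m + 2 * (W + 1)"
    by (simp add: algebra_simps)
  also have "(2 :: int poly) * (W + 1) = smult 2 (W + 1)"
    by (simp add: numeral_poly)
  finally show thesis
    by (rule that)
qed

lemma cyclo_factor_degree: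
  assumes "cyclo m = G * H"
  shows "degree G = 0 \<or> degree H = 0"
proof -
  let ?s = "\<lambda>p. pcompose p [:1, 1 :: int:]"
  obtain V where V: "?s (cyclo m) = [:0, 1:] ^ 2 ^ m + smult 2 V"
    using cyclo_shift_eisenstein .
  have deg: "degree (?s p) = degree p" for p
    by (simp add: degree_pcompose)
  have "degree (?s G) = 0 \<or> degree (?s H) = 0"
  proof (rule eisenstein_2)
    show "?s (cyclo m) = ?s G * ?s H"
      unfolding assms pcompose_mult ..
    show "odd (lead_coeff (?s (cyclo m)))"
      using lead_coeff_comp[of "[:1, 1:]" "cyclo m"] by simp
    show "even (coeff (?s (cyclo m)) i)" if "i < degree (?s (cyclo m))" for i
    proof -
      have "[:0, 1:] ^ 2 ^ m = monom (1 :: int) (2 ^ m)"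
        by (simp add: monom_altdef)
      then show ?thesis
        using that deg[of "cyclo m"] unfolding V by simp
    qed
    have "coeff (?s (cyclo m)) 0 = 2"
      by (simp add: pcompose_coeff_0)
    then show "\<not> 4 dvd coeff (?s (cyclo m)) 0"
      by simp
  qed
  then show ?thesis
    unfolding deg .
qed

definition zeval :: "nat \<Rightarrow> int poly \<Rightarrow> complex" where
  "zeval m P = poly (of_int_poly P) (\<zeta> m)"

lemma zeval_0 [simp]: "zeval m 0 = 0"
  and zeval_1 [simp]: "zeval m 1 = 1"
  and zeval_X [simp]: "zeval m [:0, 1:] = \<zeta> m" "zeval m (pCons 0 1) = \<zeta> m"
  and zeval_pCons: "zeval m (pCons c P) = of_int c + \<zeta> m * zeval m P"
  and zeval_add [simp]: "zeval m (P + Q) = zeval m P + zeval m Q"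
  and zeval_diff [simp]: "zeval m (P - Q) = zeval m P - zeval m Q"
  and zeval_mult [simp]: "zeval m (P * Q) = zeval m P * zeval m Q"
  and zeval_power [simp]: "zeval m (P ^ j) = zeval m P ^ j"
  and zeval_smult [simp]: "zeval m (smult c P) = of_int c * zeval m P"
  and zeval_monom: "zeval m (monom c j) = of_int c * \<zeta> m ^ j"
  and zeval_sum: "zeval m (sum f A) = (\<Sum>i\<in>A. zeval m (f i))"
  by (simp_all add: zeval_def hom_distribs poly_monom poly_sum)

lemma zeval_numeral [simp]: "zeval m (numeral k) = numeral k"
  by (simp add: zeval_def numeral_poly)

lemma zeval_cyclo [simp]: "zeval m (cyclo m) = 0"
  by (simp add: cyclo_def zeta_power_half)

interpretation of_rat_poly_hom: map_poly_comm_ring_hom "of_rat :: rat \<Rightarrow> complex" ..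

lemma zeval_eq_0_imp_zero:
  assumes "zeval m P = 0" and "degree P < 2 ^ m"
  shows "P = 0"
proof (rule ccontr)
  assume "P \<noteq> 0"
  let ?q = "map_poly rat_of_int" and ?c = "map_poly (of_rat :: rat \<Rightarrow> complex)"
  have root: "poly (?c (?q p)) (\<zeta> m) = zeval m p" for p
    by (simp add: zeval_def map_poly_map_poly o_def)
  define g where "g = gcd (?q (cyclo m)) (?q P)"
  have "g \<noteq> 0" and "?q P \<noteq> 0"
    using \<open>P \<noteq> 0\<close> by (simp_all add: g_def)
  have "poly (?c g) (\<zeta> m) = 0"
  proof -
    have "g = fst (bezout_coefficients (?q (cyclo m)) (?q P)) * ?q (cyclo m)
            + snd (bezout_coefficients (?q (cyclo m)) (?q P)) * ?q P"
      unfolding g_def by (rule bezout_coefficients_fst_snd[symmetric])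
    then show ?thesis
      using root[of "cyclo m"] root[of P] assms(1) by (simp add: hom_distribs)
  qed
  have "degree g \<noteq> 0"
  proof
    assume "degree g = 0"
    then obtain c where "g = [:c:]"
      by (rule degree_eq_zeroE)
    then show False
      using \<open>g \<noteq> 0\<close> \<open>poly (?c g) (\<zeta> m) = 0\<close> by simp
  qed
  have "degree g \<le> degree (?q P)"
    using \<open>?q P \<noteq> 0\<close> by (intro dvd_imp_degree_le) (simp_all add: g_def)
  then have "degree g < 2 ^ m"
    using assms(2) by simp
  obtain h where h: "?q (cyclo m) = g * h"
    unfolding g_def by (metis gcd_dvd1 dvdE)
  have "h \<noteq> 0"
    using h by auto
  have "degree (?q (cyclo m)) = 2 ^ m"
    by simp
  then have "degree g + degree h = 2 ^ m"
    unfolding h using \<open>g \<noteq> 0\<close> \<open>h \<noteq> 0\<close> by (simp add: degree_mult_eq)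
  then have "degree h \<noteq> 0"
    using \<open>degree g < 2 ^ m\<close> by simp
  from rat_to_int_factor[OF h] obtain G H
    where "cyclo m = G * H" "degree G = degree g" "degree H = degree h" by blast
  then show False
    using cyclo_factor_degree \<open>degree g \<noteq> 0\<close> \<open>degree h \<noteq> 0\<close> by metis
qed

lemma divmod_cyclo:
  obtains Q R where "P = cyclo m * Q + R" and "degree R < 2 ^ m"
proof -
  obtain Q R where "pseudo_divmod P (cyclo m) = (Q, R)"
    by (metis surj_pair)
  from pseudo_divmod[OF cyclo_nonzero this] show thesis
    by (intro that[of Q R]) auto
qed

lemma cyclo_dvd_if_zeval_eq_0:
  assumes "zeval m P = 0"
  shows "cyclo m dvd P"
proof -
  obtain Q R where P: "P = cyclo m * Q + R" and "degree R < 2 ^ m"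
    using divmod_cyclo .
  have "zeval m R = 0"
    using assms by (simp add: P)
  then have "R = 0"
    using zeval_eq_0_imp_zero \<open>degree R < 2 ^ m\<close> by blast
  then show ?thesis
    by (simp add: P)
qed

section \<open>The prime \<open>1 - \<zeta> m\<close> above 2\<close>

text \<open>The residue field of the prime \<open>1 - \<zeta> m\<close> is \<open>\<int>/2\<close>, and the
  residue of \<open>zeval m P\<close> is the parity of \<open>poly P 1\<close>.\<close>

lemma even_poly_1_diff_if_zeval_eq:
  assumes "zeval m P = zeval m Q"
  shows "even (poly P 1 - poly Q 1)"
proof -
  obtain S where "P - Q = cyclo m * S"
    using cyclo_dvd_if_zeval_eq_0[of m "P - Q"] assms by (auto elim: dvdE)
  then have "poly P 1 - poly Q 1 = 2 * poly S 1"
    by (metis poly_diff poly_mult poly_cyclo_1)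
  then show ?thesis
    by simp
qed

definition geom_poly :: "nat \<Rightarrow> int poly" where
  "geom_poly j = (\<Sum>i<j. [:0, 1:] ^ i)"

lemma zeval_geom_poly: "(1 - \<zeta> m) * zeval m (geom_poly j) = 1 - \<zeta> m ^ j"
  by (simp add: geom_poly_def zeval_sum one_diff_power_eq)

lemma poly_geom_poly_1 [simp]: "poly (geom_poly j) 1 = int j"
  by (simp add: geom_poly_def poly_sum)

lemma zeval_divide_one_minus_zeta:
  assumes "even (poly P 1)"
  obtains P' where "zeval m P = (1 - \<zeta> m) * zeval m P'"
proof -
  obtain d where d: "poly P 1 = 2 * d"
    using assms by (elim evenE)
  have "poly (P - [:poly P 1:]) 1 = 0"
    by simp
  then have "[:-1, 1:] dvd P - [:poly P 1:]"
    by (metis poly_eq_0_iff_dvd)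
  then obtain S where S: "P = [:-1, 1:] * S + [:poly P 1:]"
    by (metis diff_add_cancel dvdE)
  have "zeval m P = (\<zeta> m - 1) * zeval m S + 2 * of_int d"
    by (subst S) (simp add: zeval_pCons d algebra_simps)
  also have "2 = (1 - \<zeta> m) * zeval m (geom_poly (2 ^ m))"
    by (simp add: zeval_geom_poly zeta_power_half)
  finally have "zeval m P = (1 - \<zeta> m) * zeval m (smult d (geom_poly (2 ^ m)) - S)"
    by (simp add: algebra_simps)
  then show thesis
    by (rule that)
qed

lemma one_minus_zeta_power_half:
  obtains W where "(1 - \<zeta> m) ^ 2 ^ m = 2 * zeval m W" and "odd (poly W 1)"
proof -
  obtain W where W: "(1 + [:0, 1:] + 2 * - [:0, 1:] :: int poly) ^ 2 ^ m = 1 + [:0, 1:] ^ 2 ^ m + 2 * W"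
    using power2_power_add_mod2[of 1 "[:0, 1:]" "- [:0, 1:]" m] unfolding power_one by blast
  have lhs: "1 + [:0, 1:] + 2 * - [:0, 1:] = (1 - [:0, 1:] :: int poly)"
    by simp
  have "0 = 2 + 2 * poly W 1"
    using arg_cong[OF W, of "\<lambda>p. poly p 1"] unfolding lhs by (simp add: power_0_left)
  then have "odd (poly W 1)"
    by presburger
  moreover have "(1 - \<zeta> m) ^ 2 ^ m = 2 * zeval m W"
    using arg_cong[OF W, of "zeval m"] unfolding lhs by (simp add: zeta_power_half)
  ultimately show thesis
    using that by blast
qed

lemma zeval_split_one_minus_zeta_power:
  "\<exists>t\<le>N. \<exists>h. zeval m P = (1 - \<zeta> m) ^ t * zeval m h \<and> (t = N \<or> odd (poly h 1))"
proof (induction N)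
  case 0
  show ?case by auto
next
  case (Suc N)
  then obtain t h where t: "t \<le> N" and h: "zeval m P = (1 - \<zeta> m) ^ t * zeval m h"
    and stop: "t = N \<or> odd (poly h 1)"
    by blast
  show ?case
  proof (cases "odd (poly h 1)")
    case True
    then show ?thesis
      using t h by (intro exI[of _ t]) auto
  next
    case False
    then obtain h' where "zeval m h = (1 - \<zeta> m) * zeval m h'"
      using zeval_divide_one_minus_zeta by blast
    then have "zeval m P = (1 - \<zeta> m) ^ Suc N * zeval m h'"
      using h stop False by simp
    then show ?thesis
      by blast
  qed
qed

text \<open>Complex conjugation on \<open>\<int>[\<zeta> m]\<close>, realised on representatives by \<open>X \<mapsto> X^(2^(m+1) - 1)\<close>.\<close>

definition conj_poly :: "nat \<Rightarrow> int poly \<Rightarrow> int poly" where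
  "conj_poly m P = pcompose P ([:0, 1:] ^ (2 * 2 ^ m - 1))"

lemma poly_of_int_poly_cnj: "poly (of_int_poly P) (cnj x) = cnj (poly (of_int_poly P) x)"
  by (rule poly_cnj_real[symmetric]) (simp add: coeff_map_poly)

lemma eval_conj_poly:
  fixes x :: complex
  shows "poly (of_int_poly (conj_poly m P)) x = poly (of_int_poly P) (x ^ (2 * 2 ^ m - 1))"
  by (simp add: conj_poly_def of_int_hom.map_poly_pcompose poly_pcompose hom_distribs)

lemma zeval_conj_poly: "zeval m (conj_poly m P) = cnj (zeval m P)"
  unfolding zeval_def eval_conj_poly cnj_zeta[symmetric] poly_of_int_poly_cnj ..

lemma poly_conj_poly_1 [simp]: "poly (conj_poly m P) 1 = poly P 1"
  by (simp add: conj_poly_def poly_pcompose)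

lemma one_minus_cnj_zeta:
  "1 - cnj (\<zeta> m) = (1 - \<zeta> m) * zeval m (geom_poly (2 * 2 ^ m - 1))"
  and odd_geom_poly: "odd (poly (geom_poly (2 * 2 ^ m - 1)) 1)"
proof -
  show "1 - cnj (\<zeta> m) = (1 - \<zeta> m) * zeval m (geom_poly (2 * 2 ^ m - 1))"
    unfolding zeval_geom_poly cnj_zeta ..
  have "odd (2 * x - 1 :: nat)" if "x > 0" for x
    using that by presburger
  then have "odd (2 * 2 ^ m - 1 :: nat)"
    by simp
  then show "odd (poly (geom_poly (2 * 2 ^ m - 1)) 1)"
    by simp
qed

lemma cnj_zeval_one_minus_zeta_power:
  assumes "zeval m P = (1 - \<zeta> m) ^ t * zeval m h"
  shows "cnj (zeval m P) = (1 - \<zeta> m) ^ t * zeval m (geom_poly (2 * 2 ^ m - 1) ^ t * conj_poly m h)"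
proof -
  have "cnj (zeval m P) = ((1 - \<zeta> m) * zeval m (geom_poly (2 * 2 ^ m - 1))) ^ t * zeval m (conj_poly m h)"
    unfolding assms complex_cnj_mult complex_cnj_power complex_cnj_diff complex_cnj_one
      one_minus_cnj_zeta zeval_conj_poly[symmetric] ..
  then show ?thesis
    by (simp only: power_mult_distrib zeval_mult zeval_power mult.assoc)
qed

lemma one_minus_zeta_power_ne_zeval_odd:
  assumes "r > 0" and "odd (poly L 1)"
  shows "(1 - \<zeta> m) ^ r \<noteq> zeval m L"
proof
  assume "(1 - \<zeta> m) ^ r = zeval m L"
  then have "zeval m ((1 - [:0, 1:]) ^ r) = zeval m L"
    by (simp only: zeval_power zeval_diff zeval_1 zeval_X)
  then have "even (poly ((1 - [:0, 1:]) ^ r) 1 - poly L 1)"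
    by (rule even_poly_1_diff_if_zeval_eq)
  then show False
    using assms by (simp add: power_0_left)
qed

text \<open>If \<open>(1 - \<zeta>)^t\<close> with \<open>t < 2^m\<close> is the exact power of the prime dividing \<open>zeval m P\<close>, then
  \<open>(1 - \<zeta>)^(2t)\<close> is the exact power dividing its norm \<open>4^e\<close>; but \<open>2\<close> is \<open>(1 - \<zeta>)^(2^m)\<close> times a
  unit, so that power is \<open>2^m \<cdot> 2e > 2t\<close>.\<close>

lemma two_dvd_zeval_if_norm_eq_4_power:
  assumes norm: "zeval m P * cnj (zeval m P) = 4 ^ e" and "e \<ge> 1"
  obtains Q where "zeval m P = 2 * zeval m Q"
proof -
  let ?\<pi> = "1 - \<zeta> m"
  obtain W where W: "?\<pi> ^ 2 ^ m = 2 * zeval m W" and "odd (poly W 1)"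
    using one_minus_zeta_power_half .
  obtain t h where "t \<le> 2 ^ m" and h: "zeval m P = ?\<pi> ^ t * zeval m h"
    and stop: "t = 2 ^ m \<or> odd (poly h 1)"
    using zeval_split_one_minus_zeta_power by blast
  show thesis
  proof (cases "t = 2 ^ m")
    case True
    then have "zeval m P = 2 * zeval m (W * h)"
      using h W by simp
    then show thesis
      by (rule that)
  next
    case False
    then have "t < 2 ^ m" and "odd (poly h 1)"
      using \<open>t \<le> 2 ^ m\<close> stop by simp_all
    define L where "L = geom_poly (2 * 2 ^ m - 1) ^ t * conj_poly m h * h * W ^ (2 * e)"
    have "odd (poly L 1)"
      using \<open>odd (poly h 1)\<close> \<open>odd (poly W 1)\<close> odd_geom_poly[of m] by (simp add: L_def)
    have "2 * t < 2 ^ m * (2 * e)"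
      using \<open>t < 2 ^ m\<close> \<open>e \<ge> 1\<close> mult_le_mono2[of 1 e "2 * 2 ^ m"] by linarith
    define r where "r = 2 ^ m * (2 * e) - 2 * t"
    have "?\<pi> ^ (2 * t) * ?\<pi> ^ r = (?\<pi> ^ 2 ^ m) ^ (2 * e)"
      using \<open>2 * t < 2 ^ m * (2 * e)\<close> by (simp add: r_def flip: power_add power_mult)
    also have "\<dots> = (2 ^ 2) ^ e * zeval m W ^ (2 * e)"
      by (simp only: W power_mult_distrib power_mult)
    also have "\<dots> = cnj (zeval m P) * zeval m P * zeval m W ^ (2 * e)"
      using norm by (simp add: mult.commute)
    also have "\<dots> = ?\<pi> ^ (2 * t) * zeval m L"
      unfolding cnj_zeval_one_minus_zeta_power[OF h] unfolding h L_def zeval_mult zeval_power mult_2 power_add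
      by (simp only: mult_ac)
    finally have "?\<pi> ^ r = zeval m L"
      using zeta_power_half[of m] by (auto simp: mult_left_cancel)
    moreover have "r > 0"
      using \<open>2 * t < 2 ^ m * (2 * e)\<close> by (simp add: r_def)
    ultimately show thesis
      using one_minus_zeta_power_ne_zeval_odd \<open>odd (poly L 1)\<close> by blast
  qed
qed

lemma zeval_norm_eq_4_power:
  "zeval m P * cnj (zeval m P) = 4 ^ e \<Longrightarrow>
    \<exists>Q. zeval m P = 2 ^ e * zeval m Q \<and> zeval m Q * cnj (zeval m Q) = 1"
proof (induction e arbitrary: P)
  case 0
  then show ?case
    by (intro exI[of _ P]) simp
next
  case (Suc e)
  obtain Q where Q: "zeval m P = 2 * zeval m Q"
    using two_dvd_zeval_if_norm_eq_4_power[OF Suc.prems] by auto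
  have "4 * (zeval m Q * cnj (zeval m Q)) = 4 * 4 ^ e"
    using Suc.prems unfolding Q by (simp add: mult_ac)
  then obtain R where "zeval m Q = 2 ^ e * zeval m R" and "zeval m R * cnj (zeval m R) = 1"
    using Suc.IH by auto
  then show ?case
    using Q by (intro exI[of _ R]) simp
qed

section \<open>Galois conjugates and Parseval's identity\<close>

lemma odd_power_zeta_root:
  "(\<zeta> m ^ (2 * l + 1)) ^ 2 ^ m = -1"
  unfolding power_mult[symmetric] mult.commute[of "2 * l + 1"] power_mult zeta_power_half by simp

lemma cnj_zeval_conj_poly_at_roots:
  assumes "zeval m R * cnj (zeval m R) = 1" and root: "x ^ 2 ^ m = -1"
  shows "poly (of_int_poly R) x * cnj (poly (of_int_poly R) x) = 1"
proof -
  have "zeval m (R * conj_poly m R - 1) = 0"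
    using assms(1) by (simp add: zeval_conj_poly)
  then obtain S where S: "R * conj_poly m R - 1 = cyclo m * S"
    using cyclo_dvd_if_zeval_eq_0 by (blast elim: dvdE)
  have "poly (of_int_poly (cyclo m)) x = 0"
    using root by (simp add: cyclo_def hom_distribs)
  then have "poly (of_int_poly (R * conj_poly m R - 1)) x = 0"
    unfolding S by (simp add: hom_distribs)
  then have "poly (of_int_poly R) x * poly (of_int_poly (conj_poly m R)) x = 1"
    by (simp add: hom_distribs)
  then show ?thesis
    unfolding eval_conj_poly cnj_root_of_minus_one[OF root, symmetric] poly_of_int_poly_cnj .
qed

lemma odd_zeta_power_mult_cnj:
  "(\<zeta> m ^ (2 * l + 1)) ^ i * cnj ((\<zeta> m ^ (2 * l + 1)) ^ j)
    = \<zeta> m ^ (i + (2 * 2 ^ m - 1) * j) * (\<zeta> m ^ (2 * (i + (2 * 2 ^ m - 1) * j))) ^ l"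
proof -
  define K :: nat where "K = 2 * 2 ^ m - 1"
  have "cnj (\<zeta> m ^ (2 * l + 1)) = (\<zeta> m ^ (2 * l + 1)) ^ K"
    unfolding K_def by (rule cnj_root_of_minus_one[OF odd_power_zeta_root])
  then have "cnj ((\<zeta> m ^ (2 * l + 1)) ^ j) = (\<zeta> m ^ (2 * l + 1)) ^ (K * j)"
    by (simp only: complex_cnj_power[of "\<zeta> m ^ (2 * l + 1)" j] power_mult)
  then have "(\<zeta> m ^ (2 * l + 1)) ^ i * cnj ((\<zeta> m ^ (2 * l + 1)) ^ j)
      = \<zeta> m ^ ((2 * l + 1) * i + (2 * l + 1) * (K * j))"
    unfolding power_add power_mult by simp
  also have "(2 * l + 1) * i + (2 * l + 1) * (K * j) = (i + K * j) + 2 * (i + K * j) * l"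
    by (simp add: algebra_simps)
  finally show ?thesis
    unfolding K_def power_add power_mult .
qed

lemma zeta_power_eq_1_imp_eq:
  assumes "i < 2 ^ m" and "j < 2 ^ m" and "\<zeta> m ^ (2 * (i + (2 * 2 ^ m - 1) * j)) = 1"
  shows "i = j"
proof (rule ccontr)
  assume "i \<noteq> j"
  have "int (2 * 2 ^ m - 1) = 2 * 2 ^ m - 1"
    by (simp add: of_nat_diff)
  then have D: "int (i + (2 * 2 ^ m - 1) * j) = (int i - int j) + int (2 ^ m) * (2 * int j)"
    unfolding of_nat_add of_nat_mult by (simp add: algebra_simps)
  have "2 * 2 ^ m dvd 2 * (i + (2 * 2 ^ m - 1) * j)"
    using assms(3) by (rule zeta_power_eq_1D)
  then have "2 ^ m dvd i + (2 * 2 ^ m - 1) * j"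
    by (simp only: nat_mult_dvd_cancel1 zero_less_numeral)
  then have "int (2 ^ m) dvd int (i + (2 * 2 ^ m - 1) * j)"
    by (simp only: of_nat_dvd_iff)
  then have "int (2 ^ m) dvd int i - int j"
    unfolding D by (metis dvd_add_left_iff dvd_triv_left)
  then have "\<bar>int (2 ^ m)\<bar> \<le> \<bar>int i - int j\<bar>"
    using \<open>i \<noteq> j\<close> by (intro dvd_imp_le_int) simp_all
  then show False
    using assms(1,2) by linarith
qed

lemma sum_odd_zeta_powers_orthogonal:
  assumes "i < 2 ^ m" and "j < 2 ^ m"
  shows "(\<Sum>l<2 ^ m. (\<zeta> m ^ (2 * l + 1)) ^ i * cnj ((\<zeta> m ^ (2 * l + 1)) ^ j))
    = (if i = j then 2 ^ m else 0)"
proof -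
  define D where "D = i + (2 * 2 ^ m - 1) * j"
  define q where "q = \<zeta> m ^ (2 * D)"
  have sum: "(\<Sum>l<2 ^ m. (\<zeta> m ^ (2 * l + 1)) ^ i * cnj ((\<zeta> m ^ (2 * l + 1)) ^ j))
      = \<zeta> m ^ D * (\<Sum>l<2 ^ m. q ^ l)"
    unfolding odd_zeta_power_mult_cnj sum_distrib_left D_def q_def ..
  show ?thesis
  proof (cases "i = j")
    case True
    obtain K where K: "2 * 2 ^ m = Suc K"
      using not0_implies_Suc by fastforce
    have "D = (2 * 2 ^ m) * i"
      unfolding D_def True K by simp
    then have "\<zeta> m ^ D = (\<zeta> m ^ (2 * 2 ^ m)) ^ i"
      by (simp only: power_mult)
    then have "\<zeta> m ^ D = 1"
      by (simp add: zeta_power_order)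
    moreover have "q = 1"
      unfolding q_def mult.commute[of 2 D] power_mult \<open>\<zeta> m ^ D = 1\<close> by simp
    ultimately show ?thesis
      unfolding sum using True by simp
  next
    case False
    have "q ^ 2 ^ m = (\<zeta> m ^ (2 * 2 ^ m)) ^ D"
      unfolding q_def power_mult[symmetric] by (simp only: mult_ac)
    then have "q ^ 2 ^ m = 1"
      by (simp add: zeta_power_order)
    moreover have "q \<noteq> 1"
      using zeta_power_eq_1_imp_eq[OF assms] False by (auto simp: q_def D_def)
    ultimately show ?thesis
      unfolding sum using False by (simp add: sum_gp_strict)
  qed
qed

lemma poly_of_int_poly_as_sum:
  assumes "degree R < N"
  shows "poly (of_int_poly R) (x :: complex) = (\<Sum>i<N. of_int (coeff R i) * x ^ i)"
proof -
  have "poly (of_int_poly R) x = (\<Sum>i\<le>degree R. of_int (coeff R i) * x ^ i)"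
    unfolding poly_altdef by simp
  also have "\<dots> = (\<Sum>i<N. of_int (coeff R i) * x ^ i)"
    using assms by (intro sum.mono_neutral_left) (auto simp: coeff_eq_0)
  finally show ?thesis .
qed

lemma sum_norm_conjugates:
  assumes "degree R < 2 ^ m"
  shows "(\<Sum>l<2 ^ m. poly (of_int_poly R) (\<zeta> m ^ (2 * l + 1)) * cnj (poly (of_int_poly R) (\<zeta> m ^ (2 * l + 1))))
    = 2 ^ m * of_int (\<Sum>i<2 ^ m. (coeff R i) ^ 2)"
proof -
  let ?M = "{..<(2::nat) ^ m}"
  let ?x = "\<lambda>l. \<zeta> m ^ (2 * l + 1)"
  define c where "c i = (of_int (coeff R i) :: complex)" for i
  define T where "T l i j = ?x l ^ i * cnj (?x l ^ j)" for l i j :: nat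
  have "poly (of_int_poly R) (?x l) * cnj (poly (of_int_poly R) (?x l))
      = (\<Sum>i\<in>?M. \<Sum>j\<in>?M. c i * c j * T l i j)" for l
    unfolding poly_of_int_poly_as_sum[OF assms] cnj_sum sum_product
    by (intro sum.cong refl) (simp only: c_def T_def complex_cnj_mult complex_cnj_of_int mult_ac)
  then have "(\<Sum>l\<in>?M. poly (of_int_poly R) (?x l) * cnj (poly (of_int_poly R) (?x l)))
      = (\<Sum>l\<in>?M. \<Sum>i\<in>?M. \<Sum>j\<in>?M. c i * c j * T l i j)"
    by simp
  also have "\<dots> = (\<Sum>i\<in>?M. \<Sum>l\<in>?M. \<Sum>j\<in>?M. c i * c j * T l i j)"
    by (rule sum.swap)
  also have "\<dots> = (\<Sum>i\<in>?M. \<Sum>j\<in>?M. \<Sum>l\<in>?M. c i * c j * T l i j)"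
    by (rule sum.cong[OF refl], rule sum.swap)
  also have "\<dots> = (\<Sum>i\<in>?M. \<Sum>j\<in>?M. c i * c j * (\<Sum>l\<in>?M. T l i j))"
    by (simp only: sum_distrib_left)
  also have "\<dots> = (\<Sum>i\<in>?M. \<Sum>j\<in>?M. if i = j then c i * c j * 2 ^ m else 0)"
  proof (intro sum.cong refl)
    fix i j
    assume "i \<in> ?M" and "j \<in> ?M"
    then have "(\<Sum>l\<in>?M. T l i j) = (if i = j then 2 ^ m else 0)"
      unfolding T_def by (intro sum_odd_zeta_powers_orthogonal) auto
    then show "c i * c j * (\<Sum>l\<in>?M. T l i j) = (if i = j then c i * c j * 2 ^ m else 0)"
      by simp
  qed
  also have "\<dots> = 2 ^ m * of_int (\<Sum>i\<in>?M. (coeff R i) ^ 2)"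
    by (simp add: c_def sum_distrib_left power2_eq_square mult_ac)
  finally show ?thesis .
qed

lemma coeff_if_zeval_norm_eq_4_power:
  assumes deg: "degree P < 2 ^ m" and norm: "zeval m P * cnj (zeval m P) = 4 ^ e"
  shows "coeff P i \<in> {0, 2 ^ e, - (2 ^ e)}"
proof -
  obtain Q where Q: "zeval m P = 2 ^ e * zeval m Q" and norm_Q: "zeval m Q * cnj (zeval m Q) = 1"
    using zeval_norm_eq_4_power[OF norm] by blast
  obtain S R where "Q = cyclo m * S + R" and deg_R: "degree R < 2 ^ m"
    using divmod_cyclo .
  then have R: "zeval m R = zeval m Q"
    by simp
  have "zeval m (P - smult (2 ^ e) R) = 0"
    using Q R by simp
  moreover have "degree (P - smult (2 ^ e) R) < 2 ^ m"
    using degree_diff_le_max[of P "smult (2 ^ e) R"] degree_smult_le[of "2 ^ e" R] deg deg_R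
    by linarith
  ultimately have P: "P = smult (2 ^ e) R"
    using zeval_eq_0_imp_zero by fastforce
  have "(\<Sum>l<2 ^ m. poly (of_int_poly R) (\<zeta> m ^ (2 * l + 1)) * cnj (poly (of_int_poly R) (\<zeta> m ^ (2 * l + 1))))
      = (\<Sum>l<(2::nat) ^ m. (1::complex))"
    using cnj_zeval_conj_poly_at_roots[OF _ odd_power_zeta_root] norm_Q R by (intro sum.cong) auto
  then have "(2 ^ m :: complex) * of_int (\<Sum>i<2 ^ m. (coeff R i) ^ 2) = 2 ^ m * 1"
    unfolding sum_norm_conjugates[OF deg_R] by simp
  then have "(of_int (\<Sum>i<2 ^ m. (coeff R i) ^ 2) :: complex) = 1"
    by (subst (asm) mult_left_cancel) simp_all
  then have sum_squares: "(\<Sum>i<2 ^ m. (coeff R i) ^ 2) = 1"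
    by (simp only: of_int_eq_1_iff)
  have "coeff R i \<in> {0, 1, -1}"
  proof (cases "i < 2 ^ m")
    case True
    have "(coeff R i) ^ 2 \<le> 1"
      using member_le_sum[of i "{..<2 ^ m}" "\<lambda>i. (coeff R i) ^ 2"] True sum_squares by simp
    then have "\<bar>coeff R i\<bar> \<le> 1"
      by (simp only: abs_square_le_1)
    then show ?thesis
      by auto
  next
    case False
    then show ?thesis
      using deg_R by (simp add: coeff_eq_0)
  qed
  then show ?thesis
    unfolding P by auto
qed

section \<open>The spectra of the Gray map and of \<open>f\<close>\<close>

lemma card_less_Suc_filter:
  "card {i. i < Suc n \<and> P i} = of_bool (P 0) + card {i. i < n \<and> P (Suc i)}"
proof -
  have "{i. i < Suc n \<and> P i} = {i. i = 0 \<and> P 0} \<union> Suc ` {i. i < n \<and> P (Suc i)}"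
    by (auto simp: less_Suc_eq_0_disj)
  moreover have "card (Suc ` {i. i < n \<and> P (Suc i)}) = card {i. i < n \<and> P (Suc i)}"
    by (simp add: card_image)
  ultimately show ?thesis
    by (cases "P 0") (simp_all add: card_insert_if)
qed

lemma dotp_Nil [simp]: "dotp [] x = False" "dotp u [] = False"
  by (simp_all add: dotp_def)

lemma dotp_Cons [simp]: "dotp (a # u) (b # x) = ((a \<and> b) \<noteq> dotp u x)"
proof -
  have "dotp (a # u) (b # x) = odd (card {i. i < Suc (min (length x) (length u)) \<and> (a # u) ! i \<and> (b # x) ! i})"
    unfolding dotp_def by (rule arg_cong[where f = "\<lambda>S. odd (card S)"]) auto
  also have "\<dots> = odd (of_bool (a \<and> b) + card {i. i < length x \<and> i < length u \<and> u ! i \<and> x ! i})"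
    unfolding card_less_Suc_filter by simp
  finally show ?thesis
    unfolding dotp_def by (cases a; cases b) simp_all
qed

lemma dotp_append:
  "length u = length x \<Longrightarrow> dotp (u @ z) (x @ y) = (dotp u x \<noteq> dotp z y)"
  by (induction u x rule: list_induct2) auto

lemma finite_vecs [simp]: "finite (vecs K)"
  using finite_lists_length_eq[of "UNIV :: bool set" K] by (simp add: vecs_def)

lemma sum_vecs_Suc:
  "(\<Sum>v\<in>vecs (Suc K). f v) = (\<Sum>t\<in>vecs K. f (True # t)) + (\<Sum>t\<in>vecs K. f (False # t))"
proof -
  have "vecs (Suc K) = Cons True ` vecs K \<union> Cons False ` vecs K"
    unfolding vecs_def by (auto simp: length_Suc_conv image_iff)
  then have "(\<Sum>v\<in>vecs (Suc K). f v) = sum f (Cons True ` vecs K) + sum f (Cons False ` vecs K)"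
    by (simp only:) (rule sum.union_disjoint, auto)
  then show ?thesis
    by (simp add: sum.reindex)
qed

lemma sum_vecs_add:
  "(\<Sum>v\<in>vecs (n + K). f v) = (\<Sum>x\<in>vecs n. \<Sum>y\<in>vecs K. f (x @ y))"
proof -
  have "bij_betw (\<lambda>(x, y). x @ y) (vecs n \<times> vecs K) (vecs (n + K))"
  proof (rule bij_betwI[where g = "\<lambda>v. (take n v, drop n v)"])
  qed (auto simp: vecs_def)
  then show ?thesis
    by (simp add: sum.reindex_bij_betw[symmetric] sum.cartesian_product prod.case_distrib)
qed

lemma neg_one_power_xor:
  "(-1 :: 'a :: ring_1) ^ of_bool (p \<noteq> q) = (-1) ^ of_bool p * (-1) ^ of_bool q"
  by (cases p; cases q) simp_all

lemma sum_vecs_character: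
  assumes "\<alpha> \<in> vecs K" and "z \<in> vecs K"
  shows "(\<Sum>y\<in>vecs K. (-1 :: int) ^ of_bool (dotp \<alpha> y \<noteq> dotp z y)) = (if \<alpha> = z then 2 ^ K else 0)"
  using assms
proof (induction K arbitrary: \<alpha> z)
  case 0
  then show ?case
    by (simp add: vecs_def)
next
  case (Suc K)
  obtain a \<alpha>' c z' where \<alpha>: "\<alpha> = a # \<alpha>'" and z: "z = c # z'" and "\<alpha>' \<in> vecs K" "z' \<in> vecs K"
    using Suc.prems unfolding vecs_def by (auto simp: length_Suc_conv)
  let ?S = "\<Sum>t\<in>vecs K. (-1 :: int) ^ of_bool (dotp \<alpha>' t \<noteq> dotp z' t)"
  have sign_True: "(-1 :: int) ^ of_bool (((a \<and> True) \<noteq> p) \<noteq> ((c \<and> True) \<noteq> q))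
      = (-1) ^ of_bool (a \<noteq> c) * (-1) ^ of_bool (p \<noteq> q)" for p q
    by (cases a; cases c; cases p; cases q) simp_all
  have sign_False: "(-1 :: int) ^ of_bool (((a \<and> False) \<noteq> p) \<noteq> ((c \<and> False) \<noteq> q))
      = (-1) ^ of_bool (p \<noteq> q)" for p q
    by simp
  have "(\<Sum>y\<in>vecs (Suc K). (-1 :: int) ^ of_bool (dotp \<alpha> y \<noteq> dotp z y))
      = (-1) ^ of_bool (a \<noteq> c) * ?S + ?S"
    unfolding sum_vecs_Suc \<alpha> z dotp_Cons sum_distrib_left
    by (simp only: sign_True sign_False)
  also have "\<dots> = (if \<alpha> = z then 2 ^ Suc K else 0)"
    unfolding Suc.IH[OF \<open>\<alpha>' \<in> vecs K\<close> \<open>z' \<in> vecs K\<close>] \<alpha> z by (cases a; cases c) auto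
  finally show ?case .
qed

definition coord_vec :: "nat \<Rightarrow> (nat \<Rightarrow> bool list \<Rightarrow> bool) \<Rightarrow> bool list \<Rightarrow> bool list" where
  "coord_vec K a x = map (\<lambda>i. a i x) [0..<K]"

lemma coord_vec_in_vecs [simp]: "coord_vec K a x \<in> vecs K"
  by (simp add: coord_vec_def vecs_def)

lemma gray_append:
  assumes "x \<in> vecs n" and "y \<in> vecs K"
  shows "gray n (Suc K) a (x @ y) = (dotp (coord_vec K a x) y \<noteq> a K x)"
proof -
  have "{i. i < K \<and> a i x \<and> y ! i}
      = {i. i < length y \<and> i < length (coord_vec K a x) \<and> coord_vec K a x ! i \<and> y ! i}"
    using assms by (auto simp: vecs_def coord_vec_def)
  then show ?thesis
    using assms by (simp add: gray_def dotp_def vecs_def)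
qed

definition fibre_sum :: "nat \<Rightarrow> nat \<Rightarrow> (nat \<Rightarrow> bool list \<Rightarrow> bool) \<Rightarrow> bool list \<Rightarrow> bool list \<Rightarrow> int" where
  "fibre_sum n K a u z = (\<Sum>x | x \<in> vecs n \<and> coord_vec K a x = z. (-1) ^ of_bool (a K x \<noteq> dotp u x))"

lemma walsh_gray_append:
  assumes "u \<in> vecs n" and "z \<in> vecs K"
  shows "walsh (n + K) (gray n (Suc K) a) (u @ z) = 2 ^ K * fibre_sum n K a u z"
proof -
  let ?s = "\<lambda>x. (-1 :: int) ^ of_bool (a K x \<noteq> dotp u x)"
  have "walsh (n + K) (gray n (Suc K) a) (u @ z)
      = (\<Sum>x\<in>vecs n. ?s x * (\<Sum>y\<in>vecs K. (-1) ^ of_bool (dotp (coord_vec K a x) y \<noteq> dotp z y)))"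
    unfolding walsh_def sum_vecs_add sum_distrib_left
  proof (intro sum.cong refl)
    fix x y
    assume "x \<in> vecs n" and "y \<in> vecs K"
    moreover have "length u = length x"
      using assms(1) \<open>x \<in> vecs n\<close> by (simp add: vecs_def)
    ultimately show "(-1) ^ of_bool (gray n (Suc K) a (x @ y) \<noteq> dotp (u @ z) (x @ y))
        = ?s x * (-1) ^ of_bool (dotp (coord_vec K a x) y \<noteq> dotp z y)"
      by (simp add: gray_append dotp_append flip: neg_one_power_xor) argo
  qed
  also have "\<dots> = (\<Sum>x\<in>vecs n. if coord_vec K a x = z then 2 ^ K * ?s x else 0)"
    unfolding sum_vecs_character[OF coord_vec_in_vecs assms(2)] by (intro sum.cong refl) (simp add: mult.commute)
  also have "\<dots> = 2 ^ K * fibre_sum n K a u z"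
    by (simp add: fibre_sum_def sum.inter_filter[symmetric] sum_distrib_left)
  finally show ?thesis .
qed

fun nat_of_bits :: "bool list \<Rightarrow> nat" where
  "nat_of_bits [] = 0"
| "nat_of_bits (b # z) = of_bool b + 2 * nat_of_bits z"

lemma nat_of_bits_less: "nat_of_bits z < 2 ^ length z"
  by (induction z) auto

lemma nat_of_bits_inj:
  "length z = length z' \<Longrightarrow> nat_of_bits z = nat_of_bits z' \<Longrightarrow> z = z'"
proof (induction z z' rule: list_induct2)
  case (Cons b z c z')
  then have "b = c"
    by (cases b; cases c; simp; presburger)
  with Cons show ?case
    by simp
qed simp

lemma nat_of_bits_coord_vec: "nat_of_bits (coord_vec K a x) = (\<Sum>i<K. 2 ^ i * of_bool (a i x))"
proof (induction K arbitrary: a)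
  case 0
  then show ?case
    by (simp add: coord_vec_def)
next
  case (Suc K)
  have split: "coord_vec (Suc K) a x = a 0 x # coord_vec K (\<lambda>i. a (Suc i)) x"
    by (simp add: coord_vec_def upt_conv_Cons map_Suc_upt[symmetric] del: upt_Suc)
  have "2 * (\<Sum>i<K. 2 ^ i * of_bool (a (Suc i) x)) = (\<Sum>i<K. 2 ^ Suc i * of_bool (a (Suc i) x) :: nat)"
    by (simp only: sum_distrib_left mult.assoc[symmetric] power_Suc)
  then show ?case
    unfolding split nat_of_bits.simps Suc.IH sum.lessThan_Suc_shift by simp
qed

lemma gfun_Suc: "gfun (Suc K) a x = nat_of_bits (coord_vec K a x) + 2 ^ K * of_bool (a K x)"
  by (simp add: gfun_def nat_of_bits_coord_vec)

definition fibre_poly :: "nat \<Rightarrow> nat \<Rightarrow> (nat \<Rightarrow> bool list \<Rightarrow> bool) \<Rightarrow> bool list \<Rightarrow> int poly" where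
  "fibre_poly n K a u = (\<Sum>z\<in>vecs K. monom (fibre_sum n K a u z) (nat_of_bits z))"

lemma coeff_fibre_poly:
  assumes "z \<in> vecs K"
  shows "coeff (fibre_poly n K a u) (nat_of_bits z) = fibre_sum n K a u z"
proof -
  have "nat_of_bits z' = nat_of_bits z \<longleftrightarrow> z' = z" if "z' \<in> vecs K" for z'
    using that assms nat_of_bits_inj by (auto simp: vecs_def)
  then show ?thesis
    using assms by (simp add: fibre_poly_def coeff_sum coeff_monom if_distrib cong: if_cong)
qed

lemma degree_fibre_poly: "degree (fibre_poly n K a u) < 2 ^ K"
  unfolding fibre_poly_def
proof (rule degree_sum_less)
  fix z
  assume "z \<in> vecs K"
  then have "nat_of_bits z < 2 ^ K"
    using nat_of_bits_less[of z] by (simp add: vecs_def)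
  then show "degree (monom (fibre_sum n K a u z) (nat_of_bits z)) < 2 ^ K"
    using degree_monom_le[of "fibre_sum n K a u z" "nat_of_bits z"] by linarith
qed simp

lemma gbent_sum_eq_zeval_fibre_poly:
  "(\<Sum>x\<in>vecs n. zeta (Suc K) ^ gfun (Suc K) a x * (-1) ^ of_bool (dotp u x))
    = zeval K (fibre_poly n K a u)"
proof -
  have "(\<Sum>x\<in>vecs n. zeta (Suc K) ^ gfun (Suc K) a x * (-1) ^ of_bool (dotp u x))
      = (\<Sum>x\<in>vecs n. \<zeta> K ^ nat_of_bits (coord_vec K a x) * of_int ((-1) ^ of_bool (a K x \<noteq> dotp u x)))"
  proof (intro sum.cong refl)
    fix x
    have "zeta (Suc K) ^ gfun (Suc K) a x = \<zeta> K ^ nat_of_bits (coord_vec K a x) * (-1) ^ of_bool (a K x)"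
      unfolding gfun_Suc power_add power_mult zeta_power_half ..
    then show "zeta (Suc K) ^ gfun (Suc K) a x * (-1) ^ of_bool (dotp u x)
        = \<zeta> K ^ nat_of_bits (coord_vec K a x) * of_int ((-1) ^ of_bool (a K x \<noteq> dotp u x))"
      by (simp add: neg_one_power_xor)
  qed
  also have "\<dots> = (\<Sum>z\<in>vecs K. \<Sum>x | x \<in> vecs n \<and> coord_vec K a x = z.
      \<zeta> K ^ nat_of_bits (coord_vec K a x) * of_int ((-1) ^ of_bool (a K x \<noteq> dotp u x)))"
    by (rule sum.group[symmetric]) auto
  also have "\<dots> = (\<Sum>z\<in>vecs K. \<Sum>x | x \<in> vecs n \<and> coord_vec K a x = z.
      \<zeta> K ^ nat_of_bits z * of_int ((-1) ^ of_bool (a K x \<noteq> dotp u x)))"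
    by (intro sum.cong refl) auto
  also have "\<dots> = zeval K (fibre_poly n K a u)"
    by (simp add: fibre_poly_def zeval_sum zeval_monom fibre_sum_def sum_distrib_left mult_ac)
  finally show ?thesis .
qed

lemma walsh_gray_values:
  assumes "gbent n (Suc K) (gfun (Suc K) a)" and "n = 2 * e" and "w \<in> vecs (n + K)"
  shows "walsh (n + K) (gray n (Suc K) a) w \<in> {0, 2 ^ (e + K), - (2 ^ (e + K))}"
proof -
  define u z where "u = take n w" and "z = drop n w"
  have u: "u \<in> vecs n" and z: "z \<in> vecs K" and w: "w = u @ z"
    using assms(3) by (simp_all add: u_def z_def vecs_def)
  have "cmod (zeval K (fibre_poly n K a u)) = 2 ^ e"
    using assms(1) u unfolding gbent_def gbent_sum_eq_zeval_fibre_poly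
    by (simp add: assms(2) powr_realpow)
  then have "zeval K (fibre_poly n K a u) * cnj (zeval K (fibre_poly n K a u)) = (2 ^ e) ^ 2"
    by (simp add: complex_norm_square[symmetric])
  also have "(2 ^ e) ^ 2 = (4 :: complex) ^ e"
    by (simp only: power_mult[symmetric] mult.commute[of e 2]) (simp add: power_mult)
  finally have "fibre_sum n K a u z \<in> {0, 2 ^ e, - (2 ^ e)}"
    using coeff_if_zeval_norm_eq_4_power[OF degree_fibre_poly] coeff_fibre_poly[OF z] by metis
  then show ?thesis
    unfolding w walsh_gray_append[OF u z] by (auto simp: power_add)
qed

theorem proposition6:
  fixes n k :: nat and a :: "nat \<Rightarrow> bool list \<Rightarrow> bool"
  assumes "even n" and "k \<ge> 2"
    and "gbent n k (gfun k a)"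
  shows "plateaued (n + k - 1) (k - 1) (gray n k a)"
proof -
  obtain K where k: "k = Suc K"
    using assms(2) by (cases k) auto
  obtain e where n: "n = 2 * e"
    using assms(1) by (elim evenE)
  have "(real (n + K) + real K) / 2 = real (e + K)"
    by (simp add: n)
  then have "2 powr ((real (n + K) + real K) / 2) = 2 ^ (e + K)"
    by (simp only: powr_realpow zero_less_numeral)
  then show ?thesis
    using walsh_gray_values[OF assms(3)[unfolded k] n] unfolding plateaued_def k by force
qed

end
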